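(* Let $E=\mathcal O_{\mathbb P^1}(a)\oplus\mathcal O_{\mathbb P^1}(b)$ with $1\le a\le b$. Then the closures of the nonempty strata satisfy \[\mathbb{R}_b(E)=\overline{\mathbb{R}_b(E)}\subset\overline{\mathbb{R}_a(E)}\subset\overline{\mathbb{R}_{a-1}(E)}\subset\cdots\subset\overline{\mathbb{R}_1(E)}.\] In particular the resonance $\mathbb{R}(E)$ is the closure of $\mathbb{R}_1(E)$, which is isomorphic to the image of $\mathbb P^1\times\mathbb P^{a+b-1}\to\mathbb P^{a+b+1}$ under the map $\theta_1$.
   Context: The resonance $\mathbb{R}(E):=\{[s]\in\mathbb{P}H^0(E):\exists\,t\in H^0(E),\ s\wedge t\neq0,\ \det(s\wedge t)=0\}$, where $\det:\bigwedge^2H^0(E)\to H^0(\det E)$ is the natural map; reduced structure. For a nonzero section $s$, $L_s$ is the saturation of the subsheaf generated by $s$, i.e. $\ker(E\to(E/\mathcal F)/\mathrm{tors})$ where $\mathcal F$ is the image of $s:\mathcal O\to E$; it is a line bundle. $\mathbb{R}_d(E):=\{[s]\in\mathbb{R}(E):\deg L_s=d\}$. The map $\theta_1:\mathbb{P}(H^0(\mathcal O_{\mathbb P^1}(1)))\times\mathbb{P}(H^0(E(-1)))\to\mathbb{P}(H^0(E))$ is induced by multiplication of sections, $([f],[\alpha])\mapsto[f\alpha]$; here $\mathbb{P}(H^0(\mathcal O(1)))\cong\mathbb P^1$, $\mathbb{P}(H^0(E(-1)))\cong\mathbb P^{a+b-1}$, $\mathbb{P}(H^0(E))\cong\mathbb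 P^{a+b+1}$. *)

theory Defs
  imports "HOL-Computational_Algebra.Polynomial"
begin

text \<open>Binary forms of degree n on P^1, dehomogenised (x0 = 1): H^0(O(n)).
  For n < 0 this is the zero space.\<close>
definition forms :: "int \<Rightarrow> complex poly set" where
  "forms n = {p. p = 0 \<or> int (degree p) \<le> n}"

definition sections :: "int \<Rightarrow> int \<Rightarrow> (complex poly \<times> complex poly) set" where
  "sections a b = forms a \<times> forms b"

text \<open>det : wedge^2 H^0(E) \<rightarrow> H^0(det E) = H^0(O(a+b)) on decomposable tensors.\<close>
definition det_wedge :: "complex poly \<times> complex poly \<Rightarrow> complex poly \<times> complex poly \<Rightarrow> complex poly" where
  "det_wedge s t = fst s * snd t - fst t * snd s"

definition wedge_nonzero :: "complex poly \<times> complex poly \<Rightarrow> complex poly \<times> complex poly \<Rightarrow> bool" where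
  "wedge_nonzero s t \<longleftrightarrow>
     (\<forall>c d :: complex. smult c (fst s) + smult d (fst t) = 0 \<and> smult c (snd s) + smult d (snd t) = 0
        \<longrightarrow> c = 0 \<and> d = 0)"

text \<open>Resonance, as the (scaling-invariant) cone of nonzero sections over R(E) in P H^0(E).\<close>
definition resonance :: "int \<Rightarrow> int \<Rightarrow> (complex poly \<times> complex poly) set" where
  "resonance a b = {s \<in> sections a b. s \<noteq> (0, 0) \<and>
      (\<exists>t \<in> sections a b. wedge_nonzero s t \<and> det_wedge s t = 0)}"

text \<open>deg L_s: the saturation of the subsheaf generated by s is O(d) with d the largest
  degree of a form h such that s = h * t with t a section of E(-d).\<close>
definition deg_L :: "int \<Rightarrow> int \<Rightarrow> complex poly \<times> complex poly \<Rightarrow> int" where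
  "deg_L a b s = (GREATEST d. \<exists>h \<in> forms d. h \<noteq> 0 \<and>
      (\<exists>t \<in> sections (a - d) (b - d). s = (h * fst t, h * snd t)))"

definition stratum :: "int \<Rightarrow> int \<Rightarrow> int \<Rightarrow> (complex poly \<times> complex poly) set" where
  "stratum a b d = {s \<in> resonance a b. deg_L a b s = d}"

inductive_set polyfun :: "('v \<Rightarrow> complex) set \<Rightarrow> ('v \<Rightarrow> complex) set" for C where
  pf_const: "(\<lambda>_. c) \<in> polyfun C"
| pf_coord: "x \<in> C \<Longrightarrow> x \<in> polyfun C"
| pf_add: "p \<in> polyfun C \<Longrightarrow> q \<in> polyfun C \<Longrightarrow> (\<lambda>v. p v + q v) \<in> polyfun C"
| pf_mult: "p \<in> polyfun C \<Longrightarrow> q \<in> polyfun C \<Longrightarrow> (\<lambda>v. p v * q v) \<in> polyfun C"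

text \<open>Coordinates on H^0(E) = C^(a+b+2): the coefficients of the two components.\<close>
definition coord_funs :: "int \<Rightarrow> int \<Rightarrow> (complex poly \<times> complex poly \<Rightarrow> complex) set" where
  "coord_funs a b = {(\<lambda>s. coeff (fst s) i) | i. int i \<le> a} \<union> {(\<lambda>s. coeff (snd s) j) | j. int j \<le> b}"

definition zariski_closure :: "'v set \<Rightarrow> ('v \<Rightarrow> complex) set \<Rightarrow> 'v set \<Rightarrow> 'v set" where
  "zariski_closure X C S = {v \<in> X. \<forall>P \<in> polyfun C. (\<forall>s \<in> S. P s = 0) \<longrightarrow> P v = 0}"

text \<open>Zariski closure in P H^0(E), computed on cones of nonzero vectors.\<close>
definition proj_closure :: "int \<Rightarrow> int \<Rightarrow> (complex poly \<times> complex poly) set \<Rightarrow> (complex poly \<times> complex poly) set" where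
  "proj_closure a b S = zariski_closure (sections a b - {(0, 0)}) (coord_funs a b) S"

text \<open>Cone over the image of theta_1 : P H^0(O(1)) x P H^0(E(-1)) \<rightarrow> P H^0(E).\<close>
definition theta1_image :: "int \<Rightarrow> int \<Rightarrow> (complex poly \<times> complex poly) set" where
  "theta1_image a b = {(h * fst \<alpha>, h * snd \<alpha>) | h \<alpha>.
      h \<in> forms 1 \<and> h \<noteq> 0 \<and> \<alpha> \<in> sections (a - 1) (b - 1) \<and> \<alpha> \<noteq> (0, 0)}"

end

theory Submission
  imports Defs
    "HOL-Computational_Algebra.Fundamental_Theorem_Algebra"
    "HOL-Computational_Algebra.Polynomial_Factorial"
    "HOL-Computational_Algebra.Field_as_Ring"
    "Subresultants.Resultant_Prelim"
begin

text \<open>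
  A nonzero section \<open>s = (f, g)\<close> of \<open>E = \<O>(a) \<oplus> \<O>(b)\<close> factors as \<open>s = G \<cdot> (f', g')\<close> with
  \<open>f', g'\<close> coprime, and \<open>deg L\<^sub>s\<close> is the slack \<open>min (a - deg f') (b - deg g')\<close> of the primitive
  part. Hence \<open>s\<close> is resonant iff this slack is positive, iff \<open>s = h \<cdot> t\<close> with \<open>h\<close> linear, iff
  \<open>f, g\<close> have a syzygy \<open>p f = q g\<close> with \<open>deg p < b\<close>, \<open>deg q < a\<close>, iff the Sylvester resultant of
  \<open>(f, g)\<close> in the formal degrees \<open>(a, b)\<close> vanishes; so the resonance is Zariski closed.

  For \<open>d < a\<close>, a point of \<open>\<bbbR>\<^sub>d\<^sub>+\<^sub>1\<close> is a limit along a line of points of \<open>\<bbbR>\<^sub>d\<close>: a Bezout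
  relation for \<open>(f', g')\<close> lets one trade a linear factor of \<open>G\<close> for a coprime pair of one
  higher degree. Likewise \<open>\<bbbR>\<^sub>b\<close> degenerates into \<open>\<bbbR>\<^sub>a\<close>, and \<open>\<bbbR>\<^sub>b\<close> itself is closed:
  it is cut out by \<open>f = 0\<close> when \<open>a < b\<close> and by the \<open>2 \<times> 2\<close> minors of \<open>(f, g)\<close> when \<open>a = b\<close>.
\<close>

lemma mem_forms_iff: "p \<in> forms n \<longleftrightarrow> p = 0 \<or> int (degree p) \<le> n"
  by (simp add: forms_def)

lemma mem_sections_iff: "(f, g) \<in> sections a b \<longleftrightarrow> f \<in> forms a \<and> g \<in> forms b"
  by (simp add: sections_def)

lemma forms_mult: "p \<in> forms m \<Longrightarrow> q \<in> forms n \<Longrightarrow> p * q \<in> forms (m + n)"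
  by (cases "p = 0 \<or> q = 0") (auto simp: forms_def degree_mult_eq)

lemma forms_eq_0_iff_coeffs:
  assumes "p \<in> forms a"
  shows "p = 0 \<longleftrightarrow> (\<forall>i. int i \<le> a \<longrightarrow> coeff p i = 0)"
proof
  assume low: "\<forall>i. int i \<le> a \<longrightarrow> coeff p i = 0"
  have "coeff p i = 0" for i
  proof (cases "int i \<le> a")
    case False
    then have "p = 0 \<or> degree p < i"
      using assms by (auto simp: mem_forms_iff)
    then show ?thesis
      by (auto simp: coeff_eq_0)
  qed (use low in simp)
  then show "p = 0"
    by (intro poly_eqI) simp
qed simp

lemma exists_divisor_of_degree:
  fixes p :: "complex poly"
  assumes "p \<noteq> 0" "n \<le> degree p"
  obtains q where "q dvd p" "degree q = n"
proof -
  obtain root where p: "Polynomial.smult (lead_coeff p) (\<Prod>i<degree p. [:-root i, 1:]) = p"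
    using complex_poly_decompose' .
  let ?q = "\<Prod>i<n. [:-root i, 1:]"
  have "?q dvd (\<Prod>i<degree p. [:-root i, 1:])"
    using assms(2) by (intro prod_dvd_prod_subset) auto
  then have "?q dvd p"
    by (metis p dvd_smult)
  moreover have "degree ?q = n"
    by (subst degree_prod_sum_eq) auto
  ultimately show ?thesis
    using that by blast
qed

section \<open>The degree of the saturation\<close>

text \<open>For \<open>(f, g) \<noteq> (0, 0)\<close>, \<open>slack a b f g\<close> is the largest \<open>e\<close> with
  \<open>(f, g) \<in> sections (a - e) (b - e)\<close>, i.e. the largest twist \<open>E(-e)\<close> containing the section.\<close>
definition slack :: "int \<Rightarrow> int \<Rightarrow> complex poly \<Rightarrow> complex poly \<Rightarrow> int" where
  "slack a b f g = (if f = 0 then b - int (degree g) else if g = 0 then a - int (degree f)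
     else min (a - int (degree f)) (b - int (degree g)))"

lemma slack_le_fst: "f \<noteq> 0 \<Longrightarrow> slack a b f g \<le> a - int (degree f)"
  by (simp add: slack_def)

lemma mem_sections_iff_slack_nonneg:
  "(f, g) \<noteq> (0, 0) \<Longrightarrow> (f, g) \<in> sections a b \<longleftrightarrow> 0 \<le> slack a b f g"
  by (auto simp: slack_def mem_sections_iff mem_forms_iff)

lemma slack_twist: "slack (a - e) (b - e) f g = slack a b f g - e"
  by (simp add: slack_def min_def)

lemma slack_mult:
  "G \<noteq> 0 \<Longrightarrow> (f, g) \<noteq> (0, 0) \<Longrightarrow> slack a b (G * f) (G * g) = slack a b f g - int (degree G)"
  by (auto simp: slack_def degree_mult_eq)

lemma mult_mem_sections_iff:
  assumes "G \<noteq> 0" "(f, g) \<noteq> (0, 0)"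
  shows "(G * f, G * g) \<in> sections a b \<longleftrightarrow> int (degree G) \<le> slack a b f g"
proof -
  have "(G * f, G * g) \<noteq> (0, 0)"
    using assms by simp
  then show ?thesis
    using assms by (simp add: mem_sections_iff_slack_nonneg slack_mult)
qed

lemma primitive_decomposition:
  fixes f g :: "complex poly"
  assumes "(f, g) \<noteq> (0, 0)"
  obtains G f' g' where "G \<noteq> 0" "coprime f' g'" "f = G * f'" "g = G * g'"
proof
  show "gcd f g \<noteq> 0" "coprime (f div gcd f g) (g div gcd f g)"
    using assms by (auto intro: div_gcd_coprime)
qed simp_all

text \<open>The cone over the image of \<open>\<theta>\<^sub>d : \<bbbP>H\<^sup>0(\<O>(d)) \<times> \<bbbP>H\<^sup>0(E(-d)) \<rightarrow> \<bbbP>H\<^sup>0(E)\<close>.\<close>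
definition theta_image :: "int \<Rightarrow> int \<Rightarrow> int \<Rightarrow> (complex poly \<times> complex poly) set" where
  "theta_image a b d = {(h * fst t, h * snd t) | h t.
      h \<in> forms d \<and> h \<noteq> 0 \<and> t \<in> sections (a - d) (b - d)}"

lemma deg_L_eq_Greatest_theta_image: "deg_L a b s = (GREATEST d. s \<in> theta_image a b d)"
  unfolding deg_L_def theta_image_def by (rule arg_cong[where f = Greatest]) fastforce

lemma theta_image_empty_if_neg: "d < 0 \<Longrightarrow> theta_image a b d = {}"
  by (auto simp: theta_image_def mem_forms_iff)

lemma theta_image_subset_sections: "theta_image a b d \<subseteq> sections a b"
  unfolding theta_image_def sections_def using forms_mult by fastforce

lemma mult_mem_theta_image_iff:
  fixes f g G :: "complex poly"
  assumes cop: "coprime f g" and nz: "(f, g) \<noteq> (0, 0)" and G: "G \<noteq> 0" and d: "0 \<le> d"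
  shows "(G * f, G * g) \<in> theta_image a b d \<longleftrightarrow>
    int (degree G) \<le> slack a b f g \<and> d \<le> slack a b f g"
proof
  assume "(G * f, G * g) \<in> theta_image a b d"
  then obtain h t1 t2 where h: "h \<in> forms d" "h \<noteq> 0"
    and t: "(t1, t2) \<in> sections (a - d) (b - d)" and eq: "G * f = h * t1" "G * g = h * t2"
    unfolding theta_image_def by auto
  have "h dvd gcd (G * f) (G * g)"
    using eq by (metis dvd_triv_left gcd_greatest)
  also have "gcd (G * f) (G * g) = normalize G"
    using cop by (simp add: gcd_mult_left)
  finally obtain k where k: "G = h * k"
    by (auto elim: dvdE)
  have k0: "k \<noteq> 0"
    using G k by auto
  have "t1 = k * f" "t2 = k * g"
    using eq k h(2) by (metis mult.assoc mult_left_cancel)+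
  then have "(k * f, k * g) \<in> sections (a - d) (b - d)"
    using t by simp
  then have "int (degree k) \<le> slack a b f g - d"
    using mult_mem_sections_iff[OF k0 nz] by (simp add: slack_twist)
  moreover have "degree G = degree h + degree k"
    using k h(2) k0 by (simp add: degree_mult_eq)
  moreover have "int (degree h) \<le> d"
    using h by (simp add: mem_forms_iff)
  ultimately show "int (degree G) \<le> slack a b f g \<and> d \<le> slack a b f g"
    by linarith
next
  assume bound: "int (degree G) \<le> slack a b f g \<and> d \<le> slack a b f g"
  obtain h where h: "h dvd G" "degree h = min (nat d) (degree G)"
    using exists_divisor_of_degree[OF G, of "min (nat d) (degree G)"] by auto
  then obtain k where k: "G = h * k"
    by (auto elim: dvdE)
  have h0: "h \<noteq> 0" and k0: "k \<noteq> 0"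
    using G k by auto
  have "degree G = degree h + degree k"
    using k h0 k0 by (simp add: degree_mult_eq)
  then have "int (degree k) \<le> slack (a - d) (b - d) f g"
    using h(2) bound d by (cases "nat d \<le> degree G") (auto simp: slack_twist)
  then have "(k * f, k * g) \<in> sections (a - d) (b - d)"
    using mult_mem_sections_iff[OF k0 nz] by simp
  moreover have "h \<in> forms d"
    using h d by (auto simp: mem_forms_iff min_def)
  ultimately show "(G * f, G * g) \<in> theta_image a b d"
    unfolding theta_image_def using h0 k by (auto simp: mult.assoc)
qed

lemma deg_L_mult_coprime:
  fixes f g G :: "complex poly"
  assumes cop: "coprime f g" and nz: "(f, g) \<noteq> (0, 0)" and G: "G \<noteq> 0"
    and sec: "(G * f, G * g) \<in> sections a b"
  shows "deg_L a b (G * f, G * g) = slack a b f g"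
  unfolding deg_L_eq_Greatest_theta_image
proof (rule Greatest_equality)
  have "int (degree G) \<le> slack a b f g"
    using sec mult_mem_sections_iff[OF G nz] by simp
  then show "(G * f, G * g) \<in> theta_image a b (slack a b f g)"
    using mult_mem_theta_image_iff[OF cop nz G] by simp
next
  fix d
  assume "(G * f, G * g) \<in> theta_image a b d"
  then show "d \<le> slack a b f g"
    using mult_mem_theta_image_iff[OF cop nz G, of d] theta_image_empty_if_neg[of d]
    by (cases "0 \<le> d") auto
qed

lemma mem_theta_image_iff_le_deg_L:
  assumes s: "s \<in> sections a b" "s \<noteq> (0, 0)" and d: "0 \<le> d"
  shows "s \<in> theta_image a b d \<longleftrightarrow> d \<le> deg_L a b s"
proof -
  obtain f g where [simp]: "s = (f, g)"
    by (cases s)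
  have "(f, g) \<noteq> (0, 0)"
    using s(2) by simp
  then obtain G f' g' where G: "G \<noteq> 0" "coprime f' g'" and fg: "f = G * f'" "g = G * g'"
    by (rule primitive_decomposition)
  have nz: "(f', g') \<noteq> (0, 0)"
    using s fg by auto
  have "int (degree G) \<le> slack a b f' g'"
    using s fg mult_mem_sections_iff[OF G(1) nz] by simp
  then show ?thesis
    using mult_mem_theta_image_iff[OF G(2) nz G(1) d] deg_L_mult_coprime[OF G(2) nz G(1)] s fg
    by simp
qed

lemma deg_L_coprime:
  "coprime f g \<Longrightarrow> (f, g) \<in> sections a b \<Longrightarrow> (f, g) \<noteq> (0, 0) \<Longrightarrow> deg_L a b (f, g) = slack a b f g"
  using deg_L_mult_coprime[of f g 1] by simp

lemma deg_L_fst_zero: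
  assumes "(0, g) \<in> sections a b" "g \<noteq> 0"
  shows "deg_L a b (0, g) = b"
  using deg_L_mult_coprime[of 0 1 g a b] assms by (simp add: slack_def)

lemma deg_L_le_of_fst_nonzero:
  assumes sec: "(f, g) \<in> sections a b" and f: "f \<noteq> 0"
  shows "deg_L a b (f, g) \<le> a"
proof -
  have "(f, g) \<noteq> (0, 0)"
    using f by simp
  then obtain G f' g' where G: "G \<noteq> 0" "coprime f' g'" and fg: "f = G * f'" "g = G * g'"
    by (rule primitive_decomposition)
  have "f' \<noteq> 0"
    using f fg by auto
  then show ?thesis
    using deg_L_mult_coprime[OF G(2) _ G(1)] slack_le_fst[of f' a b g'] sec fg by simp
qed

lemma deg_L_eq_top_iff_fst_zero:
  assumes ab: "a < b" and sec: "(f, g) \<in> sections a b" "(f, g) \<noteq> (0, 0)"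
  shows "deg_L a b (f, g) = b \<longleftrightarrow> f = 0"
proof
  assume deg: "deg_L a b (f, g) = b"
  show "f = 0"
  proof (rule ccontr)
    assume "f \<noteq> 0"
    then have "deg_L a b (f, g) \<le> a"
      by (rule deg_L_le_of_fst_nonzero[OF sec(1)])
    then show False
      using deg ab by simp
  qed
next
  assume "f = 0"
  then show "deg_L a b (f, g) = b"
    using deg_L_fst_zero sec by simp
qed

section \<open>Resonance\<close>

lemma syzygy_of_coprime:
  fixes f g :: "'a::semiring_gcd"
  assumes cop: "coprime f g" and eq: "f * q = p * g"
  obtains m where "p = m * f" "q = m * g"
proof (cases "f = 0")
  case False
  have "f dvd p * g"
    using eq by (metis dvd_triv_left)
  then have "f dvd p"
    using cop by (simp add: coprime_dvd_mult_left_iff)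
  then obtain m where p: "p = m * f"
    by (metis dvd_def mult.commute)
  then have "f * q = f * (m * g)"
    using eq by (simp add: ac_simps)
  then show ?thesis
    using that p False by simp
next
  case True
  then have "is_unit g"
    using cop by simp
  then have "p = (q div g) * f" "q = (q div g) * g"
    using eq True by auto
  then show ?thesis
    using that by blast
qed

lemma not_wedge_nonzero_smult:
  "\<gamma> \<noteq> 0 \<Longrightarrow> \<not> wedge_nonzero (Polynomial.smult \<gamma> f, Polynomial.smult \<gamma> g)
     (Polynomial.smult \<mu> f, Polynomial.smult \<mu> g)"
  unfolding wedge_nonzero_def
  by (intro notI) (drule spec[of _ \<mu>], drule spec[of _ "- \<gamma>"], simp add: mult.commute)

lemma resonance_imp_deg_L_pos:
  assumes res: "s \<in> resonance a b"
  shows "1 \<le> deg_L a b s"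
proof (rule ccontr)
  assume low: "\<not> 1 \<le> deg_L a b s"
  obtain f g where s: "s = (f, g)"
    by (cases s)
  have sec: "(f, g) \<in> sections a b" "(f, g) \<noteq> (0, 0)"
    using res s unfolding resonance_def by auto
  obtain t1 t2 where t: "(t1, t2) \<in> sections a b" "wedge_nonzero (f, g) (t1, t2)"
    and det: "f * t2 = t1 * g"
    using res s unfolding resonance_def det_wedge_def by auto
  obtain G f' g' where G: "G \<noteq> 0" "coprime f' g'" and fg: "f = G * f'" "g = G * g'"
    using sec(2) by (rule primitive_decomposition)
  have nz: "(f', g') \<noteq> (0, 0)"
    using sec fg by auto
  have "G * (f' * t2) = G * (t1 * g')"
    using det fg by (simp add: ac_simps)
  then obtain m where m: "t1 = m * f'" "t2 = m * g'"
    using syzygy_of_coprime[OF G(2)] G(1) by auto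
  have slack: "slack a b f' g' \<le> 0"
    using low deg_L_mult_coprime[OF G(2) nz G(1)] sec fg s by simp
  have "degree m = 0"
    using t(1) m mult_mem_sections_iff[OF _ nz] slack by (cases "m = 0") fastforce+
  moreover have "degree G = 0"
    using sec fg mult_mem_sections_iff[OF G(1) nz] slack by simp
  ultimately obtain \<mu> \<gamma> where "m = [:\<mu>:]" "G = [:\<gamma>:]"
    by (meson degree_eq_zeroE)
  then show False
    using t(2) m fg G(1) not_wedge_nonzero_smult[of \<gamma> f' g' \<mu>] by simp
qed

lemma exists_independent_linear_form:
  assumes h: "h \<in> forms 1" "h \<noteq> 0"
  obtains h' where "h' \<in> forms 1"
    "\<And>c d. Polynomial.smult c h + Polynomial.smult d h' = 0 \<Longrightarrow> c = 0 \<and> d = 0"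
proof (cases "degree h = 0")
  case True
  then obtain \<eta> where "h = [:\<eta>:]" "\<eta> \<noteq> 0"
    using h(2) by (metis degree_eq_zeroE pCons_0_0)
  then show ?thesis
    by (intro that[of "[:0, 1:]"]) (auto simp: mem_forms_iff)
next
  case False
  then have "degree h = 1"
    using h by (simp add: mem_forms_iff)
  then have "coeff h 1 \<noteq> 0"
    using h(2) by (metis leading_coeff_0_iff)
  show ?thesis
  proof (rule that[of 1])
    fix c d
    assume eq: "Polynomial.smult c h + Polynomial.smult d 1 = 0"
    have "c * coeff h 1 = 0"
      using arg_cong[OF eq, of "\<lambda>p. coeff p 1"] by simp
    then have "c = 0"
      using \<open>coeff h 1 \<noteq> 0\<close> by simp
    then show "c = 0 \<and> d = 0"
      using eq by simp
  qed (simp add: mem_forms_iff)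
qed

lemma theta_image_subset_resonance: "theta_image a b 1 - {(0, 0)} \<subseteq> resonance a b"
proof
  fix s
  assume s: "s \<in> theta_image a b 1 - {(0, 0)}"
  then obtain h t1 t2 where h: "h \<in> forms 1" "h \<noteq> 0"
    and t: "(t1, t2) \<in> sections (a - 1) (b - 1)" and s_eq: "s = (h * t1, h * t2)"
    unfolding theta_image_def by auto
  have t0: "(t1, t2) \<noteq> (0, 0)"
    using s s_eq by auto
  obtain h' where h': "h' \<in> forms 1"
    and indep: "\<And>c d. Polynomial.smult c h + Polynomial.smult d h' = 0 \<Longrightarrow> c = 0 \<and> d = 0"
    using exists_independent_linear_form[OF h] by blast
  have "h' \<noteq> 0"
    using indep[of 0 1] by auto
  then have "(h' * t1, h' * t2) \<in> sections a b"
    using h' t theta_image_subset_sections unfolding theta_image_def by fastforce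
  moreover have "wedge_nonzero s (h' * t1, h' * t2)"
    unfolding wedge_nonzero_def
  proof (intro allI impI)
    fix c d
    assume "Polynomial.smult c (fst s) + Polynomial.smult d (fst (h' * t1, h' * t2)) = 0 \<and>
      Polynomial.smult c (snd s) + Polynomial.smult d (snd (h' * t1, h' * t2)) = 0"
    then have "(Polynomial.smult c h + Polynomial.smult d h') * t1 = 0"
      "(Polynomial.smult c h + Polynomial.smult d h') * t2 = 0"
      using s_eq by (simp_all add: algebra_simps)
    then show "c = 0 \<and> d = 0"
      using t0 indep by auto
  qed
  moreover have "det_wedge s (h' * t1, h' * t2) = 0"
    unfolding det_wedge_def s_eq by (simp add: ac_simps)
  ultimately show "s \<in> resonance a b"
    unfolding resonance_def using s theta_image_subset_sections by blast
qed

lemma resonance_iff_deg_L_pos: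
  "s \<in> resonance a b \<longleftrightarrow> s \<in> sections a b \<and> s \<noteq> (0, 0) \<and> 1 \<le> deg_L a b s"
proof
  assume "s \<in> resonance a b"
  then show "s \<in> sections a b \<and> s \<noteq> (0, 0) \<and> 1 \<le> deg_L a b s"
    using resonance_imp_deg_L_pos unfolding resonance_def by blast
next
  assume s: "s \<in> sections a b \<and> s \<noteq> (0, 0) \<and> 1 \<le> deg_L a b s"
  then have "s \<in> theta_image a b 1"
    using mem_theta_image_iff_le_deg_L by auto
  then show "s \<in> resonance a b"
    using s theta_image_subset_resonance by blast
qed

lemma resonance_eq_theta_image: "resonance a b = theta_image a b 1 - {(0, 0)}"
  using resonance_iff_deg_L_pos mem_theta_image_iff_le_deg_L theta_image_subset_resonance
  by fastforce

lemma theta1_image_eq_theta_image: "theta1_image a b = theta_image a b 1 - {(0, 0)}"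
  unfolding theta1_image_def theta_image_def by force

lemma resonance_iff_syzygy:
  assumes sec: "(f, g) \<in> sections a b" "(f, g) \<noteq> (0, 0)"
  shows "(f, g) \<in> resonance a b \<longleftrightarrow>
    (\<exists>p q. (p, q) \<noteq> (0, 0) \<and> p \<in> forms (b - 1) \<and> q \<in> forms (a - 1) \<and> p * f = q * g)"
proof
  assume "(f, g) \<in> resonance a b"
  then obtain h t1 t2 where "(t1, t2) \<in> sections (a - 1) (b - 1)" "f = h * t1" "g = h * t2"
    unfolding resonance_eq_theta_image theta_image_def by auto
  then show "\<exists>p q. (p, q) \<noteq> (0, 0) \<and> p \<in> forms (b - 1) \<and> q \<in> forms (a - 1) \<and> p * f = q * g"
    using sec(2) by (intro exI[of _ t2] exI[of _ t1]) (auto simp: mem_sections_iff)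
next
  assume "\<exists>p q. (p, q) \<noteq> (0, 0) \<and> p \<in> forms (b - 1) \<and> q \<in> forms (a - 1) \<and> p * f = q * g"
  then obtain p q where pq: "(p, q) \<noteq> (0, 0)" "(q, p) \<in> sections (a - 1) (b - 1)"
    and eq: "p * f = q * g"
    by (auto simp: mem_sections_iff)
  obtain G f' g' where G: "G \<noteq> 0" "coprime f' g'" and fg: "f = G * f'" "g = G * g'"
    using sec(2) by (rule primitive_decomposition)
  have nz: "(f', g') \<noteq> (0, 0)"
    using sec fg by auto
  have "G * (f' * p) = G * (q * g')"
    using eq fg by (simp add: ac_simps)
  then obtain m where m: "q = m * f'" "p = m * g'"
    using syzygy_of_coprime[OF G(2)] G(1) by auto
  have "m \<noteq> 0"
    using pq(1) m by auto
  then have "1 \<le> slack a b f' g'"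
    using pq(2) m mult_mem_sections_iff[OF _ nz] by (fastforce simp: slack_twist)
  then show "(f, g) \<in> resonance a b"
    using resonance_iff_deg_L_pos deg_L_mult_coprime[OF G(2) nz G(1)] sec fg by simp
qed

lemma mem_stratum_iff:
  "1 \<le> d \<Longrightarrow> s \<in> stratum a b d \<longleftrightarrow> s \<in> sections a b \<and> s \<noteq> (0, 0) \<and> deg_L a b s = d"
  unfolding stratum_def resonance_iff_deg_L_pos by auto

lemma stratum_subset: "stratum a b d \<subseteq> sections a b - {(0, 0)}"
  unfolding stratum_def resonance_def by auto

lemma stratum_nonempty_iff:
  assumes a: "1 \<le> a" and ab: "a \<le> b"
  shows "stratum a b d \<noteq> {} \<longleftrightarrow> (1 \<le> d \<and> d \<le> a) \<or> d = b"
proof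
  assume "stratum a b d \<noteq> {}"
  then obtain f g where s: "(f, g) \<in> stratum a b d"
    by auto
  then have sec: "(f, g) \<in> sections a b" "(f, g) \<noteq> (0, 0)" and d: "1 \<le> d" "deg_L a b (f, g) = d"
    unfolding stratum_def resonance_iff_deg_L_pos by auto
  show "(1 \<le> d \<and> d \<le> a) \<or> d = b"
    using sec d deg_L_fst_zero deg_L_le_of_fst_nonzero by (cases "f = 0") auto
next
  assume d: "(1 \<le> d \<and> d \<le> a) \<or> d = b"
  let ?x = "monom (1 :: complex) (nat (b - d))"
  have "(1, ?x) \<in> stratum a b d" if "1 \<le> d" "d \<le> a"
  proof -
    have "(1, ?x) \<in> sections a b"
      using that a ab by (simp add: mem_sections_iff mem_forms_iff degree_monom_eq)
    moreover have "slack a b 1 ?x = d"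
      using that ab by (simp add: slack_def degree_monom_eq)
    ultimately show ?thesis
      using that deg_L_coprime[of 1 ?x] by (simp add: mem_stratum_iff)
  qed
  moreover have "(0, 1) \<in> stratum a b b"
    using a ab deg_L_fst_zero[of 1 a b] by (simp add: mem_stratum_iff mem_sections_iff mem_forms_iff)
  ultimately show "stratum a b d \<noteq> {}"
    using d by blast
qed

section \<open>Zariski closure\<close>

lemma subset_proj_closure: "S \<subseteq> sections a b - {(0, 0)} \<Longrightarrow> S \<subseteq> proj_closure a b S"
  unfolding proj_closure_def zariski_closure_def by auto

lemma proj_closure_least:
  "S \<subseteq> proj_closure a b T \<Longrightarrow> proj_closure a b S \<subseteq> proj_closure a b T"
  unfolding proj_closure_def zariski_closure_def by blast

lemma proj_closure_zero_set:
  assumes "\<And>i. Q i \<Longrightarrow> P i \<in> polyfun (coord_funs a b)"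
  shows "proj_closure a b {s \<in> sections a b - {(0, 0)}. \<forall>i. Q i \<longrightarrow> P i s = 0}
    = {s \<in> sections a b - {(0, 0)}. \<forall>i. Q i \<longrightarrow> P i s = 0}"
  using assms unfolding proj_closure_def zariski_closure_def by blast

lemma polyfun_sum:
  "finite A \<Longrightarrow> (\<And>x. x \<in> A \<Longrightarrow> F x \<in> polyfun C) \<Longrightarrow> (\<lambda>v. \<Sum>x\<in>A. F x v) \<in> polyfun C"
proof (induction A rule: finite_induct)
  case empty
  then show ?case
    using pf_const[of 0] by simp
next
  case (insert x A)
  then show ?case
    using pf_add[of "F x" C "\<lambda>v. \<Sum>x\<in>A. F x v"] by simp
qed

lemma polyfun_prod:
  "finite A \<Longrightarrow> (\<And>x. x \<in> A \<Longrightarrow> F x \<in> polyfun C) \<Longrightarrow> (\<lambda>v. \<Prod>x\<in>A. F x v) \<in> polyfun C"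
proof (induction A rule: finite_induct)
  case empty
  then show ?case
    using pf_const[of 1] by simp
next
  case (insert x A)
  then show ?case
    using pf_mult[of "F x" C "\<lambda>v. \<Prod>x\<in>A. F x v"] by simp
qed

lemma polyfun_If:
  "(c \<Longrightarrow> P \<in> polyfun C) \<Longrightarrow> (\<not> c \<Longrightarrow> Q \<in> polyfun C) \<Longrightarrow>
    (\<lambda>v. if c then P v else Q v) \<in> polyfun C"
  by (cases c) simp_all

lemma polyfun_diff: "p \<in> polyfun C \<Longrightarrow> q \<in> polyfun C \<Longrightarrow> (\<lambda>v. p v - q v) \<in> polyfun C"
  using pf_add[OF _ pf_mult[OF pf_const[of "- 1"]], of p C q] by simp

lemma polyfun_coeff_fst: "int i \<le> a \<Longrightarrow> (\<lambda>s. coeff (fst s) i) \<in> polyfun (coord_funs a b)"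
  by (intro pf_coord) (auto simp: coord_funs_def)

lemma polyfun_coeff_snd: "int i \<le> b \<Longrightarrow> (\<lambda>s. coeff (snd s) i) \<in> polyfun (coord_funs a b)"
  by (intro pf_coord) (auto simp: coord_funs_def)

lemma polyfun_det:
  assumes M: "\<And>v. M v \<in> carrier_mat n n"
    and entries: "\<And>i j. i < n \<Longrightarrow> j < n \<Longrightarrow> (\<lambda>v. M v $$ (i, j)) \<in> polyfun C"
  shows "(\<lambda>v. det (M v)) \<in> polyfun C"
proof -
  have "(\<lambda>v. \<Sum>p \<in> {p. p permutes {0..<n}}. signof p * (\<Prod>i = 0..<n. M v $$ (i, p i)))
      \<in> polyfun C"
    by (intro polyfun_sum polyfun_prod pf_mult pf_const entries)
      (auto simp: finite_permutations permutes_in_image)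
  then show ?thesis
    by (simp add: det_def'[OF M])
qed

definition line_point ::
  "complex poly \<times> complex poly \<Rightarrow> complex poly \<times> complex poly \<Rightarrow> complex \<Rightarrow> complex poly \<times> complex poly"
  where "line_point s w c = (fst s + Polynomial.smult c (fst w), snd s + Polynomial.smult c (snd w))"

lemma polyfun_on_line:
  assumes "P \<in> polyfun (coord_funs a b)"
  shows "\<exists>q. \<forall>c. P (line_point s w c) = poly q c"
  using assms
proof (induction rule: polyfun.induct)
  case (pf_const c)
  show ?case
    by (intro exI[of _ "[:c:]"]) simp
next
  case (pf_coord x)
  then consider i where "x = (\<lambda>s. coeff (fst s) i)" | i where "x = (\<lambda>s. coeff (snd s) i)"
    unfolding coord_funs_def by blast
  then show ?case
  proof cases
    case 1
    then show ?thesis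
      by (intro exI[of _ "[:coeff (fst s) i, coeff (fst w) i:]"]) (simp add: line_point_def)
  next
    case 2
    then show ?thesis
      by (intro exI[of _ "[:coeff (snd s) i, coeff (snd w) i:]"]) (simp add: line_point_def)
  qed
next
  case (pf_add p q)
  then obtain q1 q2 where "\<forall>c. p (line_point s w c) = poly q1 c" "\<forall>c. q (line_point s w c) = poly q2 c"
    by blast
  then show ?case
    by (intro exI[of _ "q1 + q2"]) simp
next
  case (pf_mult p q)
  then obtain q1 q2 where "\<forall>c. p (line_point s w c) = poly q1 c" "\<forall>c. q (line_point s w c) = poly q2 c"
    by blast
  then show ?case
    by (intro exI[of _ "q1 * q2"]) simp
qed

text \<open>A coordinate polynomial vanishing on the punctured line restricts to a polynomial in \<open>c\<close>
  with infinitely many roots, so it also vanishes at \<open>c = 0\<close>.\<close>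
lemma mem_proj_closure_if_punctured_line:
  assumes s: "s \<in> sections a b" "s \<noteq> (0, 0)"
    and line: "\<And>c. c \<noteq> 0 \<Longrightarrow> line_point s w c \<in> S"
  shows "s \<in> proj_closure a b S"
  unfolding proj_closure_def zariski_closure_def
proof (intro CollectI conjI ballI impI)
  show "s \<in> sections a b - {(0, 0)}"
    using s by simp
  fix P
  assume P: "P \<in> polyfun (coord_funs a b)" and vanish: "\<forall>v\<in>S. P v = 0"
  obtain q where q: "\<And>c. P (line_point s w c) = poly q c"
    using polyfun_on_line[OF P] by blast
  have "poly q c = 0" if "c \<noteq> 0" for c
    using q[of c] vanish line[OF that] by simp
  then have "UNIV - {0} \<subseteq> {c. poly q c = 0}"
    by auto
  then have "q = 0"
    using poly_roots_finite[of q] infinite_UNIV_char_0 finite_subset by fastforce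
  moreover have "line_point s w 0 = s"
    by (simp add: line_point_def)
  ultimately show "P s = 0"
    using q[of 0] by simp
qed

section \<open>The resultant\<close>

text \<open>The entries \<open>l, \<dots>, l + r - 1\<close> of \<open>v\<close> as the coefficients of a polynomial of degree
  \<open>< r\<close>, highest degree first: the column order of \<open>sylvester_mat_sub\<close>.\<close>
definition vec_block_poly :: "nat \<Rightarrow> nat \<Rightarrow> 'a::comm_monoid_add vec \<Rightarrow> 'a poly" where
  "vec_block_poly l r v = (\<Sum>i\<in>{l..<l + r}. monom (v $ i) (l + r - 1 - i))"

lemma coeff_vec_block_poly:
  "coeff (vec_block_poly l r v) k = (if k < r then v $ (l + r - 1 - k) else 0)"
proof (cases "k < r")
  case True
  have "coeff (vec_block_poly l r v) k = (\<Sum>i\<in>{l..<l + r}. if i = l + r - 1 - k then v $ i else 0)"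
    unfolding vec_block_poly_def coeff_sum using True by (intro sum.cong) (auto simp: coeff_monom)
  moreover have "l + r - 1 - k \<in> {l..<l + r}"
    using True by auto
  ultimately show ?thesis
    using True by simp
next
  case False
  then show ?thesis
    unfolding vec_block_poly_def coeff_sum by (auto simp: coeff_monom intro!: sum.neutral)
qed

lemma degree_vec_block_poly:
  assumes "0 < r"
  shows "degree (vec_block_poly l r v) < r"
proof -
  have "degree (vec_block_poly l r v) \<le> r - 1"
    by (rule degree_le) (auto simp: coeff_vec_block_poly)
  then show ?thesis
    using assms by linarith
qed

lemma sylvester_mat_sub_entry:
  fixes p q :: "'a::comm_ring_1 poly"
  assumes p: "degree p \<le> m" and q: "degree q \<le> n" and i: "i < m + n" and j: "j < m + n"
  shows "sylvester_mat_sub m n p q $$ (i, j) =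
    coeff (if i < n then monom 1 (n - 1 - i) * p else monom 1 (m + n - 1 - i) * q) (m + n - 1 - j)"
  using p q i j
  by (auto simp: sylvester_mat_sub_index coeff_monom_mult intro!: coeff_eq_0 arg_cong[where f = "coeff _"])

lemma transpose_sylvester_mult_vec:
  fixes p q :: "'a::comm_ring_1 poly"
  assumes p: "degree p \<le> m" and q: "degree q \<le> n"
    and v: "v \<in> carrier_vec (m + n)" and j: "j < m + n"
  shows "(transpose_mat (sylvester_mat_sub m n p q) *\<^sub>v v) $ j =
    coeff (vec_block_poly 0 n v * p + vec_block_poly n m v * q) (m + n - 1 - j)"
proof -
  let ?R = "\<lambda>i. if i < n then monom 1 (n - 1 - i) * p else monom 1 (m + n - 1 - i) * q"
  have "(transpose_mat (sylvester_mat_sub m n p q) *\<^sub>v v) $ j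
      = (\<Sum>i\<in>{0..<m + n}. sylvester_mat_sub m n p q $$ (i, j) * v $ i)"
    using v j by (simp add: scalar_prod_def mult.commute)
  also have "\<dots> = coeff (\<Sum>i\<in>{0..<m + n}. Polynomial.smult (v $ i) (?R i)) (m + n - 1 - j)"
    unfolding coeff_sum using p q j
    by (intro sum.cong refl) (simp add: sylvester_mat_sub_entry mult.commute)
  also have "(\<Sum>i\<in>{0..<m + n}. Polynomial.smult (v $ i) (?R i))
      = vec_block_poly 0 n v * p + vec_block_poly n m v * q"
    by (simp add: vec_block_poly_def sum.atLeastLessThan_concat[of 0 n "m + n", symmetric]
        sum_distrib_right smult_monom mult_smult_left[symmetric] add.commute)
  finally show ?thesis .
qed

lemma transpose_sylvester_kernel_iff:
  fixes p q :: "'a::comm_ring_1 poly"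
  assumes p: "degree p \<le> m" and q: "degree q \<le> n" and m: "0 < m" and n: "0 < n"
    and v: "v \<in> carrier_vec (m + n)"
  shows "transpose_mat (sylvester_mat_sub m n p q) *\<^sub>v v = 0\<^sub>v (m + n) \<longleftrightarrow>
    vec_block_poly 0 n v * p + vec_block_poly n m v * q = 0"
    (is "_ \<longleftrightarrow> ?F = 0")
proof
  assume "transpose_mat (sylvester_mat_sub m n p q) *\<^sub>v v = 0\<^sub>v (m + n)"
  then have rev: "coeff ?F (m + n - 1 - j) = 0" if "j < m + n" for j
    using transpose_sylvester_mult_vec[OF p q v that] that by simp
  have low: "coeff ?F k = 0" if "k < m + n" for k
    using rev[of "m + n - 1 - k"] that by (simp add: diff_diff_cancel)
  have "degree (vec_block_poly 0 n v * p) < m + n" "degree (vec_block_poly n m v * q) < m + n"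
    using degree_mult_le[of "vec_block_poly 0 n v" p] degree_mult_le[of "vec_block_poly n m v" q]
      degree_vec_block_poly[OF n, of 0 v] degree_vec_block_poly[OF m, of n v] p q by linarith+
  then have "degree ?F < m + n"
    using degree_add_le_max[of "vec_block_poly 0 n v * p" "vec_block_poly n m v * q"] by linarith
  then show "?F = 0"
    using low by (intro poly_eqI) (metis coeff_0 coeff_eq_0 leI le_less_trans)
next
  assume "?F = 0"
  then show "transpose_mat (sylvester_mat_sub m n p q) *\<^sub>v v = 0\<^sub>v (m + n)"
    using transpose_sylvester_mult_vec[OF p q v] by (intro eq_vecI) simp_all
qed

lemma vec_block_polys_surj:
  fixes A B :: "'a::comm_monoid_add poly"
  assumes "degree A < n" "degree B < m"
  obtains v where "v \<in> carrier_vec (m + n)" "vec_block_poly 0 n v = A" "vec_block_poly n m v = B"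
proof
  define v where "v = vec (m + n) (\<lambda>i. if i < n then coeff A (n - 1 - i) else coeff B (m + n - 1 - i))"
  show "v \<in> carrier_vec (m + n)"
    by (simp add: v_def)
  show "vec_block_poly 0 n v = A"
    by (rule poly_eqI) (use assms(1) in \<open>auto simp: coeff_vec_block_poly v_def coeff_eq_0\<close>)
  show "vec_block_poly n m v = B"
    by (rule poly_eqI) (use assms(2) in \<open>auto simp: coeff_vec_block_poly v_def coeff_eq_0\<close>)
qed

lemma vec_block_polys_eq_0_iff:
  assumes "v \<in> carrier_vec (m + n)"
  shows "vec_block_poly 0 n v = 0 \<and> vec_block_poly n m v = 0 \<longleftrightarrow> v = 0\<^sub>v (m + n)"
proof
  assume zero: "vec_block_poly 0 n v = 0 \<and> vec_block_poly n m v = 0"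
  have "v $ i = 0" if i: "i < m + n" for i
  proof (cases "i < n")
    case True
    then show ?thesis
      using zero coeff_vec_block_poly[of 0 n v "n - 1 - i"] by simp
  next
    case False
    then have "m + n - 1 - i < m" "n + m - 1 - (m + n - 1 - i) = i"
      using i by arith+
    then show ?thesis
      using zero coeff_vec_block_poly[of n m v "m + n - 1 - i"] by simp
  qed
  then show "v = 0\<^sub>v (m + n)"
    using assms by (intro eq_vecI) auto
qed (auto intro!: poly_eqI simp: coeff_vec_block_poly)

lemma sylvester_det_eq_0_iff:
  fixes p q :: "'a::idom poly"
  assumes p: "degree p \<le> m" and q: "degree q \<le> n" and m: "0 < m" and n: "0 < n"
  shows "det (sylvester_mat_sub m n p q) = 0 \<longleftrightarrow>
    (\<exists>A B. (A, B) \<noteq> (0, 0) \<and> degree A < n \<and> degree B < m \<and> A * p + B * q = 0)"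
proof -
  have S: "transpose_mat (sylvester_mat_sub m n p q) \<in> carrier_mat (m + n) (m + n)"
    by (simp add: sylvester_mat_sub_carrier)
  have "det (sylvester_mat_sub m n p q) = 0 \<longleftrightarrow> (\<exists>v. v \<in> carrier_vec (m + n) \<and> v \<noteq> 0\<^sub>v (m + n)
      \<and> vec_block_poly 0 n v * p + vec_block_poly n m v * q = 0)"
    using det_0_iff_vec_prod_zero[OF S] transpose_sylvester_kernel_iff[OF p q m n]
    by (auto simp: det_transpose[OF sylvester_mat_sub_carrier])
  also have "\<dots> \<longleftrightarrow> (\<exists>A B. (A, B) \<noteq> (0, 0) \<and> degree A < n \<and> degree B < m \<and> A * p + B * q = 0)"
  proof
    assume "\<exists>v. v \<in> carrier_vec (m + n) \<and> v \<noteq> 0\<^sub>v (m + n)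
      \<and> vec_block_poly 0 n v * p + vec_block_poly n m v * q = 0"
    then show "\<exists>A B. (A, B) \<noteq> (0, 0) \<and> degree A < n \<and> degree B < m \<and> A * p + B * q = 0"
      using vec_block_polys_eq_0_iff degree_vec_block_poly m n by blast
  next
    assume "\<exists>A B. (A, B) \<noteq> (0, 0) \<and> degree A < n \<and> degree B < m \<and> A * p + B * q = 0"
    then obtain A B where AB: "(A, B) \<noteq> (0, 0)" "degree A < n" "degree B < m" "A * p + B * q = 0"
      by blast
    obtain v where "v \<in> carrier_vec (m + n)" "vec_block_poly 0 n v = A" "vec_block_poly n m v = B"
      using vec_block_polys_surj[OF AB(2,3)] .
    then show "\<exists>v. v \<in> carrier_vec (m + n) \<and> v \<noteq> 0\<^sub>v (m + n)
      \<and> vec_block_poly 0 n v * p + vec_block_poly n m v * q = 0"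
      using AB(1,4) vec_block_polys_eq_0_iff by blast
  qed
  finally show ?thesis .
qed

lemma polyfun_resultant:
  assumes "0 \<le> a" "0 \<le> b"
  shows "(\<lambda>s. det (sylvester_mat_sub (nat a) (nat b) (fst s) (snd s))) \<in> polyfun (coord_funs a b)"
proof (rule polyfun_det)
  have fst: "(\<lambda>s. coeff (fst s) k) \<in> polyfun (coord_funs a b)" if "k \<le> nat a" for k
    using that assms by (intro polyfun_coeff_fst) simp
  have snd: "(\<lambda>s. coeff (snd s) k) \<in> polyfun (coord_funs a b)" if "k \<le> nat b" for k
    using that assms by (intro polyfun_coeff_snd) simp
  fix i j
  assume "i < nat a + nat b" "j < nat a + nat b"
  then show "(\<lambda>s. sylvester_mat_sub (nat a) (nat b) (fst s) (snd s) $$ (i, j)) \<in> polyfun (coord_funs a b)"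
    by (auto simp: sylvester_mat_sub_index intro!: polyfun_If pf_const fst snd)
qed (rule sylvester_mat_sub_carrier)

lemma resonance_iff_resultant:
  assumes a: "1 \<le> a" and b: "1 \<le> b" and sec: "(f, g) \<in> sections a b" "(f, g) \<noteq> (0, 0)"
  shows "(f, g) \<in> resonance a b \<longleftrightarrow> det (sylvester_mat_sub (nat a) (nat b) f g) = 0"
proof -
  have deg: "degree f \<le> nat a" "degree g \<le> nat b"
    using sec a b by (auto simp: mem_sections_iff mem_forms_iff)
  have "p \<in> forms (b - 1) \<longleftrightarrow> degree p < nat b" "q \<in> forms (a - 1) \<longleftrightarrow> degree q < nat a" for p q
    using a b by (auto simp: mem_forms_iff)
  then have "(f, g) \<in> resonance a b \<longleftrightarrow>
      (\<exists>p q. (p, q) \<noteq> (0, 0) \<and> degree p < nat b \<and> degree q < nat a \<and> p * f = q * g)"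
    by (simp only: resonance_iff_syzygy[OF sec])
  also have "\<dots> \<longleftrightarrow> (\<exists>A B. (A, B) \<noteq> (0, 0) \<and> degree A < nat b \<and> degree B < nat a \<and> A * f + B * g = 0)"
  proof
    assume "\<exists>p q. (p, q) \<noteq> (0, 0) \<and> degree p < nat b \<and> degree q < nat a \<and> p * f = q * g"
    then obtain p q where "(p, q) \<noteq> (0, 0)" "degree p < nat b" "degree q < nat a" "p * f = q * g"
      by blast
    then show "\<exists>A B. (A, B) \<noteq> (0, 0) \<and> degree A < nat b \<and> degree B < nat a \<and> A * f + B * g = 0"
      by (intro exI[of _ p] exI[of _ "- q"]) simp
  next
    assume "\<exists>A B. (A, B) \<noteq> (0, 0) \<and> degree A < nat b \<and> degree B < nat a \<and> A * f + B * g = 0"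
    then obtain A B where "(A, B) \<noteq> (0, 0)" "degree A < nat b" "degree B < nat a" "A * f + B * g = 0"
      by blast
    then show "\<exists>p q. (p, q) \<noteq> (0, 0) \<and> degree p < nat b \<and> degree q < nat a \<and> p * f = q * g"
      by (intro exI[of _ A] exI[of _ "- B"]) (simp add: eq_neg_iff_add_eq_0)
  qed
  also have "\<dots> \<longleftrightarrow> det (sylvester_mat_sub (nat a) (nat b) f g) = 0"
    using sylvester_det_eq_0_iff[OF deg] a b by simp
  finally show ?thesis .
qed

lemma proj_closure_resonance:
  assumes "1 \<le> a" "1 \<le> b"
  shows "proj_closure a b (resonance a b) = resonance a b"
proof -
  let ?R = "\<lambda>s. det (sylvester_mat_sub (nat a) (nat b) (fst s) (snd s))"
  have "s \<in> resonance a b \<longleftrightarrow> s \<in> sections a b - {(0, 0)} \<and> ?R s = 0" for s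
    using resonance_iff_resultant[OF assms, of "fst s" "snd s"] unfolding resonance_def by (cases s) auto
  then have "resonance a b = {s \<in> sections a b - {(0, 0)}. \<forall>P. P = ?R \<longrightarrow> P s = 0}"
    by auto
  then show ?thesis
    using proj_closure_zero_set[of "\<lambda>P. P = ?R" "\<lambda>P. P" a b] polyfun_resultant assms by simp
qed

section \<open>Degenerations between strata\<close>

lemma bezout_degree_bounded:
  fixes f g :: "complex poly"
  assumes cop: "coprime f g"
  obtains A B where "A * f + B * g = 1" "degree A \<le> degree g" "degree B \<le> degree f"
proof (cases "g = 0")
  case True
  then have "is_unit f"
    using cop by simp
  then obtain A where "A * f = 1"
    by (metis dvd_def mult.commute)
  moreover have "degree A = 0"
    using \<open>A * f = 1\<close> degree_mult_eq[of A f] by (cases "A = 0 \<or> f = 0") auto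
  ultimately show ?thesis
    using True that[of A 0] by simp
next
  case False
  have "gcd f g = 1"
    using cop by (simp add: coprime_iff_gcd_eq_1)
  then obtain A0 B0 where bez0: "A0 * f + B0 * g = 1"
    using bezout_coefficients_fst_snd[of f g] by metis
  define A where "A = A0 mod g"
  define B where "B = B0 + (A0 div g) * f"
  have "A * f + B * g = (A0 div g * g + A0 mod g) * f + B0 * g"
    unfolding A_def B_def by (simp only: algebra_simps)
  then have bez: "A * f + B * g = 1"
    using bez0 by simp
  have A: "A = 0 \<or> degree A < degree g"
    unfolding A_def using degree_mod_less[OF False] by blast
  have "degree B \<le> degree f"
  proof (cases "B = 0")
    case False
    have "B * g = 1 - A * f"
      using bez by (simp add: eq_diff_eq add.commute)
    then have "degree B + degree g = degree (1 - A * f)"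
      using degree_mult_eq[OF False \<open>g \<noteq> 0\<close>] by simp
    also have "\<dots> \<le> degree A + degree f"
      using degree_diff_le_max[of 1 "A * f"] degree_mult_le[of A f] by simp
    finally show ?thesis
      using A by auto
  qed simp
  moreover have "degree A \<le> degree g"
    using A by auto
  ultimately show ?thesis
    using that bez by blast
qed

lemma degree_linear_mult_add:
  fixes L f B :: "'a::idom poly"
  assumes L: "degree L = 1" and f: "f \<noteq> 0" and B: "degree B \<le> degree f"
  shows "L * f + B \<noteq> 0 \<and> degree (L * f + B) = degree f + 1"
proof -
  have "L \<noteq> 0"
    using L by auto
  then have "degree (L * f) = degree f + 1"
    using degree_mult_eq[of L f] f L by simp
  then have "degree (L * f + B) = degree f + 1"
    using B by (simp add: degree_add_eq_left)
  then show ?thesis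
    by auto
qed

lemma coprime_if_combination_const:
  fixes F H :: "complex poly"
  assumes "u * F + v * H = [:c:]" "c \<noteq> 0"
  shows "coprime F H"
proof (rule coprimeI)
  fix d
  assume "d dvd F" "d dvd H"
  then have "d dvd u * F + v * H"
    by simp
  moreover have "is_unit (u * F + v * H)"
    using assms by (simp add: is_unit_const_poly_iff)
  ultimately show "is_unit d"
    by (rule dvd_unit_imp_unit)
qed

text \<open>The new pair is coprime because \<open>g F - f H = c\<close>, and each component gains one degree,
  except that a zero component becomes a nonzero constant.\<close>
lemma slack_bezout_perturbation:
  fixes f g A B L :: "complex poly"
  assumes cop: "coprime f g"
    and bez: "A * f + B * g = 1" "degree A \<le> degree g" "degree B \<le> degree f"
    and L: "degree L = 1" and c: "c \<noteq> 0"
    and bounds: "slack a b f g \<le> a" "slack a b f g \<le> b"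
  defines "F \<equiv> L * f + Polynomial.smult c B" and "H \<equiv> L * g + Polynomial.smult (- c) A"
  shows "coprime F H" "(F, H) \<noteq> (0, 0)" "slack a b F H = slack a b f g - 1"
proof -
  have "g * F + (- f) * H = [:c:]"
    using bez(1) unfolding F_def H_def by (simp add: algebra_simps flip: smult_add_right)
  then show "coprime F H"
    using c by (rule coprime_if_combination_const)
  have F: "F \<noteq> 0 \<and> degree F = (if f = 0 then 0 else degree f + 1)"
  proof (cases "f = 0")
    case True
    then have "B * g = 1"
      using bez(1) by simp
    then have "B \<noteq> 0 \<and> degree B = 0"
      using degree_mult_eq[of B g] by (cases "B = 0 \<or> g = 0") auto
    then show ?thesis
      using True c unfolding F_def by simp
  next
    case False
    then show ?thesis
      using degree_linear_mult_add[OF L False, of "Polynomial.smult c B"] bez(3)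
      unfolding F_def by simp
  qed
  have H: "H \<noteq> 0 \<and> degree H = (if g = 0 then 0 else degree g + 1)"
  proof (cases "g = 0")
    case True
    then have "A * f = 1"
      using bez(1) by simp
    then have "A \<noteq> 0 \<and> degree A = 0"
      using degree_mult_eq[of A f] by (cases "A = 0 \<or> f = 0") auto
    then show ?thesis
      using True c unfolding H_def by simp
  next
    case False
    then show ?thesis
      using degree_linear_mult_add[OF L False, of "Polynomial.smult (- c) A"] bez(2)
      unfolding H_def by simp
  qed
  show "(F, H) \<noteq> (0, 0)"
    using F by simp
  have "f = 0 \<Longrightarrow> degree g = 0" "g = 0 \<Longrightarrow> degree f = 0"
    using cop by (auto simp: is_unit_iff_degree)
  then show "slack a b F H = slack a b f g - 1"
    using F H bounds cop by (auto simp: slack_def)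
qed

lemma exists_linear_pencil_factor:
  fixes G :: "complex poly"
  assumes G: "G \<noteq> 0" and deg: "int (degree G) \<le> d + 1" and d: "0 \<le> d"
  obtains l m G1 where "G = l * G1" "int (degree G1) \<le> d"
    "\<And>c. c \<noteq> 0 \<Longrightarrow> degree (l + Polynomial.smult c m) = 1"
proof (cases "degree G = 0")
  case True
  show ?thesis
  proof (rule that[of 1 G "[:0, 1:]"])
    show "int (degree G) \<le> d"
      using True d by simp
    show "degree (1 + Polynomial.smult c [:0, 1:]) = 1" if "c \<noteq> 0" for c
      using that by (simp add: one_pCons)
  qed simp
next
  case False
  then obtain l where l: "l dvd G" "degree l = 1"
    using exists_divisor_of_degree[OF G, of 1] by auto
  then obtain G1 where G1: "G = l * G1"
    by (auto elim: dvdE)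
  then have "degree G = 1 + degree G1"
    using G l by (auto simp: degree_mult_eq)
  then show ?thesis
    using that[of l G1 0] G1 l deg by simp
qed

lemma bezout_perturbation_mem_stratum:
  fixes f g A B L G :: "complex poly"
  assumes cop: "coprime f g"
    and bez: "A * f + B * g = 1" "degree A \<le> degree g" "degree B \<le> degree f"
    and L: "degree L = 1" and c: "c \<noteq> 0"
    and slack: "slack a b f g = d + 1" and d: "1 \<le> d" "d < a" and ab: "a \<le> b"
    and G: "G \<noteq> 0" "int (degree G) \<le> d"
  defines "F \<equiv> L * f + Polynomial.smult c B" and "H \<equiv> L * g + Polynomial.smult (- c) A"
  shows "(G * F, G * H) \<in> stratum a b d"
proof -
  have FH: "coprime F H" "(F, H) \<noteq> (0, 0)" "slack a b F H = d"
    using slack_bezout_perturbation[OF cop bez L c, of a b] slack d ab unfolding F_def H_def by auto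
  then have "(G * F, G * H) \<in> sections a b"
    using mult_mem_sections_iff[OF G(1) FH(2)] G(2) by simp
  then show ?thesis
    using deg_L_mult_coprime[OF FH(1,2) G(1)] FH(2,3) G(1) d by (simp add: mem_stratum_iff)
qed

text \<open>Along the line, \<open>s + c w = G\<^sub>1 \<cdot> (L f + c B, L g - c A)\<close> with \<open>L = l + c m\<close> linear.
  Its primitive part has slack one less than \<open>(f, g)\<close>, and splitting the linear factor \<open>l\<close>
  off \<open>G\<close> keeps it a section of \<open>E\<close>.\<close>
lemma stratum_succ_subset_closure:
  assumes a: "1 \<le> a" and ab: "a \<le> b" and d: "1 \<le> d" "d < a"
  shows "stratum a b (d + 1) \<subseteq> proj_closure a b (stratum a b d)"
proof
  fix s
  assume "s \<in> stratum a b (d + 1)"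
  then have sec: "s \<in> sections a b" "s \<noteq> (0, 0)" and deg: "deg_L a b s = d + 1"
    using mem_stratum_iff d by auto
  obtain f g where s: "s = (f, g)"
    by (cases s)
  have "(f, g) \<noteq> (0, 0)"
    using sec(2) s by simp
  then obtain G f' g' where G: "G \<noteq> 0" "coprime f' g'" and fg: "f = G * f'" "g = G * g'"
    by (rule primitive_decomposition)
  have nz: "(f', g') \<noteq> (0, 0)"
    using sec s fg by auto
  have slack: "slack a b f' g' = d + 1"
    using deg_L_mult_coprime[OF G(2) nz G(1)] sec deg s fg by simp
  have "int (degree G) \<le> d + 1"
    using mult_mem_sections_iff[OF G(1) nz] sec s fg slack by simp
  moreover have "0 \<le> d"
    using d by simp
  ultimately obtain l m G1 where split: "G = l * G1" "int (degree G1) \<le> d"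
    and L: "\<And>c. c \<noteq> 0 \<Longrightarrow> degree (l + Polynomial.smult c m) = 1"
    using exists_linear_pencil_factor[OF G(1)] by blast
  obtain A B where bez: "A * f' + B * g' = 1" "degree A \<le> degree g'" "degree B \<le> degree f'"
    using bezout_degree_bounded[OF G(2)] by blast
  define w where "w = (G1 * (m * f' + B), G1 * (m * g' - A))"
  have "line_point s w c \<in> stratum a b d" if c: "c \<noteq> 0" for c
  proof -
    have "line_point s w c = (G1 * ((l + Polynomial.smult c m) * f' + Polynomial.smult c B),
        G1 * ((l + Polynomial.smult c m) * g' + Polynomial.smult (- c) A))"
      unfolding line_point_def s fg w_def split
      by (simp add: algebra_simps smult_add_right smult_diff_right)
    moreover have "G1 \<noteq> 0"
      using G split by auto
    ultimately show ?thesis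
      using bezout_perturbation_mem_stratum[OF G(2) bez L[OF c] c slack d ab _ split(2)] by simp
  qed
  then show "s \<in> proj_closure a b (stratum a b d)"
    by (rule mem_proj_closure_if_punctured_line[OF sec])
qed

lemma divisor_pair_mem_stratum:
  assumes a: "1 \<le> a" and ab: "a \<le> b" and g: "g \<noteq> 0" "int (degree g) \<le> b"
    and p: "p dvd g" "degree p = min (nat a) (degree g)" and c: "c \<noteq> 0"
  shows "(Polynomial.smult c p, g) \<in> stratum a b a"
proof -
  obtain k where k: "g = p * k"
    using p(1) by (auto elim: dvdE)
  have p0: "p \<noteq> 0" and k0: "k \<noteq> 0"
    using g k by auto
  have "is_unit [:c:]"
    using c by (simp add: is_unit_const_poly_iff)
  then have cop: "coprime [:c:] k"
    by (rule is_unit_left_imp_coprime)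
  have nz: "([:c:], k) \<noteq> (0, 0)"
    using c by simp
  have deg_g: "degree g = degree p + degree k"
    using k p0 k0 by (simp add: degree_mult_eq)
  have "int (degree k) \<le> b - a"
  proof (cases "nat a \<le> degree g")
    case True
    then have "int (degree p) = a"
      using p(2) a by simp
    then show ?thesis
      using deg_g g(2) by linarith
  next
    case False
    then have "degree p = degree g"
      using p(2) by simp
    then show ?thesis
      using deg_g ab by linarith
  qed
  then have slack: "slack a b [:c:] k = a"
    using c k0 by (simp add: slack_def)
  then have "(p * [:c:], p * k) \<in> sections a b"
    using mult_mem_sections_iff[OF p0 nz] p(2) a by auto
  moreover have "(Polynomial.smult c p, g) = (p * [:c:], p * k)"
    using k by simp
  ultimately show ?thesis
    using deg_L_mult_coprime[OF cop nz p0] slack a p0 k0 by (simp add: mem_stratum_iff)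
qed

lemma stratum_top_subset_closure:
  assumes a: "1 \<le> a" and ab: "a \<le> b"
  shows "stratum a b b \<subseteq> proj_closure a b (stratum a b a)"
proof (cases "a = b")
  case True
  then show ?thesis
    using subset_proj_closure[OF stratum_subset] by simp
next
  case False
  show ?thesis
  proof
    fix s
    assume "s \<in> stratum a b b"
    then have sec: "s \<in> sections a b" "s \<noteq> (0, 0)" and deg: "deg_L a b s = b"
      using mem_stratum_iff a ab by auto
    obtain f g where s: "s = (f, g)"
      by (cases s)
    have f: "f = 0"
      using deg_L_eq_top_iff_fst_zero[of a b f g] False ab sec deg s by simp
    then have g: "g \<noteq> 0" "int (degree g) \<le> b"
      using sec s by (auto simp: mem_sections_iff mem_forms_iff)
    obtain p where p: "p dvd g" "degree p = min (nat a) (degree g)"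
      using exists_divisor_of_degree[OF g(1), of "min (nat a) (degree g)"] by auto
    have "line_point s (p, 0) c \<in> stratum a b a" if "c \<noteq> 0" for c
      using divisor_pair_mem_stratum[OF a ab g p that] s f by (simp add: line_point_def)
    then show "s \<in> proj_closure a b (stratum a b a)"
      by (rule mem_proj_closure_if_punctured_line[OF sec])
  qed
qed

lemma stratum_subset_closure_stratum_1:
  assumes a: "1 \<le> a" and ab: "a \<le> b" and d: "1 \<le> d" "d \<le> a"
  shows "stratum a b d \<subseteq> proj_closure a b (stratum a b 1)"
  using d
proof (induction d rule: int_ge_induct)
  case base
  show ?case
    by (rule subset_proj_closure[OF stratum_subset])
next
  case (step d)
  have "stratum a b (d + 1) \<subseteq> proj_closure a b (stratum a b d)"
    using stratum_succ_subset_closure[OF a ab] step by simp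
  also have "\<dots> \<subseteq> proj_closure a b (stratum a b 1)"
    using step by (intro proj_closure_least) simp
  finally show ?case .
qed

lemma resonance_eq_proj_closure_stratum_1:
  assumes a: "1 \<le> a" and ab: "a \<le> b"
  shows "resonance a b = proj_closure a b (stratum a b 1)"
proof
  have top: "stratum a b b \<subseteq> proj_closure a b (stratum a b 1)"
    using stratum_top_subset_closure[OF a ab]
      proj_closure_least[OF stratum_subset_closure_stratum_1[OF a ab a order_refl]]
    by (rule order_trans)
  show "resonance a b \<subseteq> proj_closure a b (stratum a b 1)"
  proof
    fix s
    assume "s \<in> resonance a b"
    then have s: "s \<in> stratum a b (deg_L a b s)"
      by (simp add: stratum_def)
    then have "(1 \<le> deg_L a b s \<and> deg_L a b s \<le> a) \<or> deg_L a b s = b"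
      using stratum_nonempty_iff[OF a ab] by blast
    then show "s \<in> proj_closure a b (stratum a b 1)"
    proof
      assume "1 \<le> deg_L a b s \<and> deg_L a b s \<le> a"
      then show ?thesis
        using stratum_subset_closure_stratum_1[OF a ab] s by blast
    next
      assume "deg_L a b s = b"
      then show ?thesis
        using top s by auto
    qed
  qed
  have "stratum a b 1 \<subseteq> resonance a b"
    unfolding stratum_def by blast
  also have "\<dots> \<subseteq> proj_closure a b (resonance a b)"
    by (rule subset_proj_closure) (auto simp: resonance_def)
  finally have "proj_closure a b (stratum a b 1) \<subseteq> proj_closure a b (resonance a b)"
    by (rule proj_closure_least)
  then show "proj_closure a b (stratum a b 1) \<subseteq> resonance a b"
    using proj_closure_resonance[of a b] a ab by simp
qed

section \<open>The top stratum is closed\<close>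

lemma proportional_iff_minors:
  fixes f g :: "'a::field poly"
  shows "(f = 0 \<or> (\<exists>c. g = Polynomial.smult c f)) \<longleftrightarrow>
    (\<forall>i j. coeff f i * coeff g j = coeff f j * coeff g i)"
proof
  assume minors: "\<forall>i j. coeff f i * coeff g j = coeff f j * coeff g i"
  show "f = 0 \<or> (\<exists>c. g = Polynomial.smult c f)"
  proof (cases "f = 0")
    case False
    define c where "c = coeff g (degree f) / lead_coeff f"
    have lc: "lead_coeff f \<noteq> 0"
      using False by simp
    have "coeff g j = c * coeff f j" for j
    proof -
      have "lead_coeff f * (c * coeff f j) = coeff f j * coeff g (degree f)"
        unfolding c_def using lc by simp
      also have "\<dots> = lead_coeff f * coeff g j"
        using minors by simp
      finally show ?thesis
        using lc by simp
    qed
    then have "g = Polynomial.smult c f"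
      by (intro poly_eqI) simp
    then show ?thesis
      by blast
  qed simp
next
  assume "f = 0 \<or> (\<exists>c. g = Polynomial.smult c f)"
  then show "\<forall>i j. coeff f i * coeff g j = coeff f j * coeff g i"
  proof
    assume "\<exists>c. g = Polynomial.smult c f"
    then obtain c where "g = Polynomial.smult c f"
      by blast
    then show ?thesis
      by (simp add: mult.left_commute)
  qed simp
qed

lemma deg_L_eq_iff_proportional:
  assumes sec: "(f, g) \<in> sections a a" "(f, g) \<noteq> (0, 0)"
  shows "deg_L a a (f, g) = a \<longleftrightarrow> f = 0 \<or> (\<exists>c. g = Polynomial.smult c f)"
proof
  assume deg: "deg_L a a (f, g) = a"
  obtain G f' g' where G: "G \<noteq> 0" "coprime f' g'" and fg: "f = G * f'" "g = G * g'"
    using sec(2) by (rule primitive_decomposition)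
  have nz: "(f', g') \<noteq> (0, 0)"
    using sec fg by auto
  have slack: "slack a a f' g' = a"
    using deg_L_mult_coprime[OF G(2) nz G(1)] sec deg fg by simp
  show "f = 0 \<or> (\<exists>c. g = Polynomial.smult c f)"
  proof (cases "f' = 0 \<or> g' = 0")
    case True
    then show ?thesis
      using fg by (auto intro!: exI[of _ 0])
  next
    case False
    then have "degree f' = 0" "degree g' = 0"
      using slack by (auto simp: slack_def)
    then obtain \<phi> \<gamma> where "f' = [:\<phi>:]" "g' = [:\<gamma>:]"
      by (elim degree_eq_zeroE)
    moreover have "\<phi> \<noteq> 0"
      using False calculation by simp
    ultimately have "g = Polynomial.smult (\<gamma> / \<phi>) f"
      using fg by simp
    then show ?thesis
      by blast
  qed
next
  assume "f = 0 \<or> (\<exists>c. g = Polynomial.smult c f)"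
  then consider "f = 0" | c where "f \<noteq> 0" "g = f * [:c:]"
    by (auto simp: mult.commute)
  then show "deg_L a a (f, g) = a"
  proof cases
    case 1
    then show ?thesis
      using sec deg_L_fst_zero by simp
  next
    case 2
    then show ?thesis
      using sec deg_L_mult_coprime[of 1 "[:c:]" f a a] by (simp add: slack_def)
  qed
qed


lemma stratum_top_eq_zero_set_less:
  assumes a: "1 \<le> a" and ab: "a < b"
  shows "stratum a b b = {s \<in> sections a b - {(0, 0)}. \<forall>i. int i \<le> a \<longrightarrow> coeff (fst s) i = 0}"
proof -
  have "s \<in> stratum a b b \<longleftrightarrow>
      s \<in> sections a b - {(0, 0)} \<and> (\<forall>i. int i \<le> a \<longrightarrow> coeff (fst s) i = 0)" for s
  proof (cases "s \<in> sections a b - {(0, 0)}")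
    case True
    obtain f g where s: "s = (f, g)"
      by (cases s)
    have "s \<in> stratum a b b \<longleftrightarrow> f = 0"
      using mem_stratum_iff[of b s a b] deg_L_eq_top_iff_fst_zero[OF ab, of f g] True s a ab by simp
    also have "\<dots> \<longleftrightarrow> (\<forall>i. int i \<le> a \<longrightarrow> coeff f i = 0)"
      using forms_eq_0_iff_coeffs[of f a] True s by (simp add: mem_sections_iff)
    finally show ?thesis
      using True s by simp
  next
    case False
    then show ?thesis
      using stratum_subset by blast
  qed
  then show ?thesis
    by blast
qed

lemma minors_vanish_iff_low_minors_vanish:
  assumes "(f, g) \<in> sections a a"
  shows "(\<forall>i j. coeff f i * coeff g j = coeff f j * coeff g i) \<longleftrightarrow>
    (\<forall>i j. int i \<le> a \<and> int j \<le> a \<longrightarrow> coeff f i * coeff g j - coeff f j * coeff g i = 0)"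
proof -
  have high: "coeff f i = 0 \<and> coeff g i = 0" if "\<not> int i \<le> a" for i
  proof -
    have "(f = 0 \<or> degree f < i) \<and> (g = 0 \<or> degree g < i)"
      using assms that by (auto simp: mem_sections_iff mem_forms_iff)
    then show ?thesis
      by (auto simp: coeff_eq_0)
  qed
  show ?thesis
  proof (intro iffI allI impI)
    fix i j
    assume "\<forall>i j. int i \<le> a \<and> int j \<le> a \<longrightarrow> coeff f i * coeff g j - coeff f j * coeff g i = 0"
    then show "coeff f i * coeff g j = coeff f j * coeff g i"
      using high[of i] high[of j] by (cases "int i \<le> a \<and> int j \<le> a") auto
  qed simp
qed

lemma stratum_top_eq_zero_set_eq:
  assumes a: "1 \<le> a"
  shows "stratum a a a = {s \<in> sections a a - {(0, 0)}. \<forall>i j. int i \<le> a \<and> int j \<le> a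
    \<longrightarrow> coeff (fst s) i * coeff (snd s) j - coeff (fst s) j * coeff (snd s) i = 0}"
proof -
  have "s \<in> stratum a a a \<longleftrightarrow> s \<in> sections a a - {(0, 0)} \<and> (\<forall>i j. int i \<le> a \<and> int j \<le> a
      \<longrightarrow> coeff (fst s) i * coeff (snd s) j - coeff (fst s) j * coeff (snd s) i = 0)" for s
  proof (cases "s \<in> sections a a - {(0, 0)}")
    case True
    obtain f g where s: "s = (f, g)"
      by (cases s)
    have "s \<in> stratum a a a \<longleftrightarrow> f = 0 \<or> (\<exists>c. g = Polynomial.smult c f)"
      using mem_stratum_iff[of a s a a] deg_L_eq_iff_proportional[of f g a] True s a by simp
    also have "\<dots> \<longleftrightarrow> (\<forall>i j. coeff f i * coeff g j = coeff f j * coeff g i)"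
      by (rule proportional_iff_minors)
    also have "\<dots> \<longleftrightarrow> (\<forall>i j. int i \<le> a \<and> int j \<le> a \<longrightarrow> coeff f i * coeff g j - coeff f j * coeff g i = 0)"
      using minors_vanish_iff_low_minors_vanish[of f g a] True s by simp
    finally show ?thesis
      using True s by simp
  next
    case False
    then show ?thesis
      using stratum_subset by blast
  qed
  then show ?thesis
    by blast
qed

lemma proj_closure_stratum_top:
  assumes a: "1 \<le> a" and ab: "a \<le> b"
  shows "proj_closure a b (stratum a b b) = stratum a b b"
proof (cases "a = b")
  case True
  let ?Q = "\<lambda>(i, j). int i \<le> a \<and> int j \<le> a"
  let ?P = "\<lambda>(i, j) s. coeff (fst s) i * coeff (snd s) j - coeff (fst s) j * coeff (snd s) i"
  have "(\<lambda>s. coeff (fst s) i * coeff (snd s) j - coeff (fst s) j * coeff (snd s) i)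
      \<in> polyfun (coord_funs a a)" if "int i \<le> a" "int j \<le> a" for i j
    using that by (intro polyfun_diff pf_mult polyfun_coeff_fst polyfun_coeff_snd)
  then have "?P ij \<in> polyfun (coord_funs a a)" if "?Q ij" for ij
    using that by (cases ij) simp
  then have "proj_closure a a {s \<in> sections a a - {(0, 0)}. \<forall>ij. ?Q ij \<longrightarrow> ?P ij s = 0}
      = {s \<in> sections a a - {(0, 0)}. \<forall>ij. ?Q ij \<longrightarrow> ?P ij s = 0}"
    by (rule proj_closure_zero_set)
  then show ?thesis
    using True stratum_top_eq_zero_set_eq[OF a] by simp
next
  case False
  have "proj_closure a b {s \<in> sections a b - {(0, 0)}. \<forall>i. int i \<le> a \<longrightarrow> coeff (fst s) i = 0}
      = {s \<in> sections a b - {(0, 0)}. \<forall>i. int i \<le> a \<longrightarrow> coeff (fst s) i = 0}"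
    by (rule proj_closure_zero_set) (rule polyfun_coeff_fst)
  then show ?thesis
    using False ab stratum_top_eq_zero_set_less[OF a] by simp
qed

theorem proposition4p8:
  fixes a b :: int
  assumes "1 \<le> a" and "a \<le> b"
  shows "(\<forall>d::int. stratum a b d \<noteq> {} \<longleftrightarrow> (1 \<le> d \<and> d \<le> a) \<or> d = b)
    \<and> stratum a b b = proj_closure a b (stratum a b b)
    \<and> proj_closure a b (stratum a b b) \<subseteq> proj_closure a b (stratum a b a)
    \<and> (\<forall>d::int. 1 \<le> d \<and> d < a \<longrightarrow>
          proj_closure a b (stratum a b (d + 1)) \<subseteq> proj_closure a b (stratum a b d))
    \<and> resonance a b = proj_closure a b (stratum a b 1)
    \<and> proj_closure a b (stratum a b 1) = theta1_image a b"
proof (intro conjI allI impI)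
  show "stratum a b d \<noteq> {} \<longleftrightarrow> (1 \<le> d \<and> d \<le> a) \<or> d = b" for d
    by (rule stratum_nonempty_iff[OF assms])
  show "stratum a b b = proj_closure a b (stratum a b b)"
    using proj_closure_stratum_top[OF assms] by simp
  show "proj_closure a b (stratum a b b) \<subseteq> proj_closure a b (stratum a b a)"
    by (rule proj_closure_least[OF stratum_top_subset_closure[OF assms]])
  show "proj_closure a b (stratum a b (d + 1)) \<subseteq> proj_closure a b (stratum a b d)"
    if "1 \<le> d \<and> d < a" for d
    using that by (intro proj_closure_least stratum_succ_subset_closure[OF assms]) simp_all
  show "resonance a b = proj_closure a b (stratum a b 1)"
    by (rule resonance_eq_proj_closure_stratum_1[OF assms])
  then show "proj_closure a b (stratum a b 1) = theta1_image a b"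
    by (simp add: resonance_eq_theta_image theta1_image_eq_theta_image)
qed

end
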